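(* Let $\theta \in [0,1]$. Let $\mathfrak{A}$ be a unital $C^*$-algebra with identity $I$, and let $U, V \in \mathfrak{A}$ be unitaries such that $UV = \exp(2\pi i\theta) VU$. Then there exist symmetries $R_1,R_2,R_3,R_4$ in $M_2(\mathfrak{A})$ such that $\exp(\pi i \theta)\begin{bmatrix} I & 0 \\ 0 & I\end{bmatrix} = R_1R_2R_3R_4$.
   Context: A symmetry is a self-adjoint unitary. $M_2(\mathfrak{A})$ denotes the $C^*$-algebra of $2\times 2$ matrices with entries in $\mathfrak{A}$. *)

theory Defs
  imports Complex_Main
begin

class cstar_algebra = real_normed_algebra_1 + banach +
  fixes scaleC :: "complex \<Rightarrow> 'a \<Rightarrow> 'a"
    and adj :: "'a \<Rightarrow> 'a"
  assumes scaleC_of_real: "scaleC (complex_of_real r) x = scaleR r x"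
    and scaleC_add_right: "scaleC c (x + y) = scaleC c x + scaleC c y"
    and scaleC_add_left: "scaleC (c + d) x = scaleC c x + scaleC d x"
    and scaleC_scaleC: "scaleC c (scaleC d x) = scaleC (c * d) x"
    and scaleC_one: "scaleC 1 x = x"
    and norm_scaleC: "norm (scaleC c x) = cmod c * norm x"
    and scaleC_mult_left: "scaleC c x * y = scaleC c (x * y)"
    and scaleC_mult_right: "x * scaleC c y = scaleC c (x * y)"
    and adj_adj: "adj (adj x) = x"
    and adj_add: "adj (x + y) = adj x + adj y"
    and adj_scaleC: "adj (scaleC c x) = scaleC (cnj c) (adj x)"
    and adj_mult: "adj (x * y) = adj y * adj x"
    and cstar_identity: "norm (adj x * x) = (norm x)\<^sup>2"

definition unitary :: "'a::cstar_algebra \<Rightarrow> bool" where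
  "unitary u \<longleftrightarrow> adj u * u = 1 \<and> u * adj u = 1"

text \<open>2x2 matrices over A: M2 a b c d = [[a, b], [c, d]].\<close>

datatype 'a mat2 = M2 'a 'a 'a 'a

fun m2_mult :: "'a::cstar_algebra mat2 \<Rightarrow> 'a mat2 \<Rightarrow> 'a mat2" where
  "m2_mult (M2 a b c d) (M2 e f g h) =
     M2 (a * e + b * g) (a * f + b * h) (c * e + d * g) (c * f + d * h)"

fun m2_adj :: "'a::cstar_algebra mat2 \<Rightarrow> 'a mat2" where
  "m2_adj (M2 a b c d) = M2 (adj a) (adj c) (adj b) (adj d)"

definition m2_id :: "'a::cstar_algebra mat2" where
  "m2_id = M2 1 0 0 1"

fun m2_scaleC :: "complex \<Rightarrow> 'a::cstar_algebra mat2 \<Rightarrow> 'a mat2" where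
  "m2_scaleC z (M2 a b c d) = M2 (scaleC z a) (scaleC z b) (scaleC z c) (scaleC z d)"

definition m2_symmetry :: "'a::cstar_algebra mat2 \<Rightarrow> bool" where
  "m2_symmetry R \<longleftrightarrow> m2_adj R = R \<and> m2_mult (m2_adj R) R = m2_id \<and> m2_mult R (m2_adj R) = m2_id"

end

theory Submission
  imports Defs
begin

text \<open>With \<open>\<lambda> = exp(\<pi> i \<theta>)\<close>, the relation reads \<open>U V = \<lambda>\<^sup>2 V U\<close>, i.e. the
  commutator \<open>U V U\<^sup>* V\<^sup>*\<close> is the scalar \<open>\<lambda>\<^sup>2\<close>. For a unitary \<open>X\<close> the
  off-diagonal matrix \<open>[[0, X\<^sup>*], [X, 0]]\<close> is a symmetry, and the product of two such
  matrices built from \<open>X\<close> and \<open>Y\<close> is \<open>diag(X\<^sup>* Y, X Y\<^sup>*)\<close>. Taking \<open>X, Y\<close> to be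
  \<open>U, 1\<close> and then \<open>V, \<lambda> V U\<close> gives \<open>diag(U\<^sup>*, U) \<cdot> diag(\<lambda> U, \<lambda>\<^sup>* V U\<^sup>* V\<^sup>*)\<close>,
  and both diagonal entries equal \<open>\<lambda>\<close> by the commutation relation.\<close>

lemma adj_one [simp]: "adj (1::'a::cstar_algebra) = 1"
proof -
  have "adj (1::'a) = adj 1 * adj (adj 1)" by (simp add: adj_adj)
  also have "\<dots> = adj (adj 1 * 1)" by (rule adj_mult[symmetric])
  also have "\<dots> = 1" by (simp add: adj_adj)
  finally show ?thesis .
qed

lemma adj_zero [simp]: "adj (0::'a::cstar_algebra) = 0"
  using adj_add[of "0::'a" 0] by simp

lemma scaleC_zero [simp]: "scaleC c (0::'a::cstar_algebra) = 0"
  using scaleC_add_right[of c "0::'a" 0] by simp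

lemma unitary_one: "unitary (1::'a::cstar_algebra)"
  by (simp add: unitary_def)

lemma unitary_mult:
  fixes x y :: "'a::cstar_algebra"
  assumes "unitary x" "unitary y"
  shows "unitary (x * y)"
proof -
  have "adj (x * y) * (x * y) = adj y * (adj x * x) * y"
    by (simp add: adj_mult mult.assoc)
  moreover have "x * y * adj (x * y) = x * (y * adj y) * adj x"
    by (simp add: adj_mult mult.assoc)
  ultimately show ?thesis
    using assms by (simp add: unitary_def)
qed

lemma unitary_scaleC:
  fixes x :: "'a::cstar_algebra"
  assumes "unitary x" "cmod c = 1"
  shows "unitary (scaleC c x)"
proof -
  have "cnj c * c = 1" "c * cnj c = 1"
    using assms(2) complex_norm_square[of c] by (simp_all add: mult.commute)
  then show ?thesis
    using assms(1) by (simp add: unitary_def adj_scaleC scaleC_mult_left scaleC_mult_right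
        scaleC_scaleC scaleC_one mult.commute)
qed

lemma unitary_commutator:
  fixes u v :: "'a::cstar_algebra"
  assumes "unitary u" "unitary v" "u * v = scaleC \<mu> (v * u)"
  shows "u * v * adj u * adj v = scaleC \<mu> 1"
proof -
  have "u * v * adj u * adj v = scaleC \<mu> (v * (u * adj u) * adj v)"
    by (simp add: assms(3) scaleC_mult_left mult.assoc)
  also have "\<dots> = scaleC \<mu> 1"
    using assms(1,2) by (simp add: unitary_def)
  finally show ?thesis .
qed

definition m2_offdiag :: "'a::cstar_algebra \<Rightarrow> 'a mat2" where
  "m2_offdiag x = M2 0 (adj x) x 0"

lemma m2_symmetry_offdiag: "unitary x \<Longrightarrow> m2_symmetry (m2_offdiag x)"
  by (simp add: m2_symmetry_def m2_offdiag_def m2_id_def unitary_def adj_adj)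

lemma m2_mult_offdiag:
  "m2_mult (m2_offdiag x) (m2_offdiag y) = M2 (adj x * y) 0 0 (x * adj y)"
  by (simp add: m2_offdiag_def)

lemma m2_mult_assoc: "m2_mult (m2_mult A B) C = m2_mult A (m2_mult B C)"
  by (cases A; cases B; cases C) (simp add: algebra_simps)

lemma m2_scaleC_id: "m2_scaleC c m2_id = M2 (scaleC c 1) 0 0 (scaleC c 1)"
  by (simp add: m2_id_def)

lemma scalar_eq_product_of_offdiag:
  fixes u v :: "'a::cstar_algebra"
  assumes "unitary u" "unitary v" "cmod l = 1"
    and "u * v = scaleC (l * l) (v * u)"
  shows "m2_scaleC l m2_id =
    m2_mult (m2_offdiag u) (m2_mult (m2_offdiag 1)
      (m2_mult (m2_offdiag v) (m2_offdiag (scaleC l (v * u)))))"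
proof -
  have "cnj l * l = 1"
    using assms(3) complex_norm_square[of l] by (simp add: mult.commute)
  have "adj u * (adj v * scaleC l (v * u)) = scaleC l (adj u * (adj v * v) * u)"
    by (simp add: scaleC_mult_right mult.assoc)
  then have upper: "adj u * (adj v * scaleC l (v * u)) = scaleC l 1"
    using assms(1,2) by (simp add: unitary_def)
  have "u * (v * adj (scaleC l (v * u))) = scaleC (cnj l) (u * v * adj u * adj v)"
    by (simp add: adj_scaleC adj_mult scaleC_mult_right mult.assoc)
  also have "\<dots> = scaleC l 1"
    using \<open>cnj l * l = 1\<close>
    by (simp add: unitary_commutator[OF assms(1,2,4)] scaleC_scaleC mult.assoc[symmetric])
  finally have lower: "u * (v * adj (scaleC l (v * u))) = scaleC l 1" .
  show ?thesis
    by (simp add: m2_mult_assoc[symmetric] m2_mult_offdiag m2_scaleC_id upper lower)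
qed

theorem proposition3p10:
  fixes \<theta> :: real and U V :: "'a::cstar_algebra"
  assumes "0 \<le> \<theta>" "\<theta> \<le> 1"
    and "unitary U" "unitary V"
    and "U * V = scaleC (exp (2 * pi * \<i> * complex_of_real \<theta>)) (V * U)"
  shows "\<exists>R1 R2 R3 R4 :: 'a mat2. m2_symmetry R1 \<and> m2_symmetry R2 \<and> m2_symmetry R3 \<and> m2_symmetry R4 \<and>
           m2_scaleC (exp (pi * \<i> * complex_of_real \<theta>)) m2_id
             = m2_mult R1 (m2_mult R2 (m2_mult R3 R4))"
proof -
  define l where "l = exp (pi * \<i> * complex_of_real \<theta>)"
  have norm_l: "cmod l = 1"
    unfolding l_def by (simp add: norm_exp_eq_Re)
  have commute: "U * V = scaleC (l * l) (V * U)"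
    using assms(5) by (simp add: l_def exp_add[symmetric] algebra_simps)
  have "unitary (scaleC l (V * U))"
    using assms(3,4) norm_l by (simp add: unitary_scaleC unitary_mult)
  moreover have "m2_scaleC l m2_id =
      m2_mult (m2_offdiag U) (m2_mult (m2_offdiag 1)
        (m2_mult (m2_offdiag V) (m2_offdiag (scaleC l (V * U)))))"
    using assms(3,4) norm_l commute by (rule scalar_eq_product_of_offdiag)
  ultimately show ?thesis
    using assms(3,4) unitary_one m2_symmetry_offdiag l_def by metis
qed

end
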